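(* Let $\mathbf{M}=\{\mathbf{m}^{(1)},\ldots,\mathbf{m}^{(d)}\}$ be a blocking of $\mathcal{A}\in\mathbb{R}^{n_1\times\cdots\times n_d}$ with $\mathbf{m}^{(k)}=[m^{(k)}_1,\ldots,m^{(k)}_{b_k}]$, $\mathbf{b}=(b_1,\ldots,b_d)$. Let $e$ be an integer with $1\le e<d$ and $\mathbf{p}$ a permutation of $1:d$. Define $\mathbf{r}=\mathbf{p}(1:e)$, $\mathbf{c}=\mathbf{p}(e+1:d)$, $\mathbf{R}=\{\mathbf{m}^{(r_1)},\ldots,\mathbf{m}^{(r_e)}\}$, $\mathbf{C}=\{\mathbf{m}^{(c_1)},\ldots,\mathbf{m}^{(c_{d-e})}\}$, $B_{rows}=b_{r_1}\cdots b_{r_e}$, $B_{cols}=b_{c_1}\cdots b_{c_{d-e}}$. Let $P_{\mathbf{R}}$ be the unique permutation matrix with $P_{\mathbf{R}}\mathrm{vec}(\mathcal{X})=\mathrm{vec}_{\mathbf{R}}(\mathcal{X})$ for all $\mathcal{X}\in\mathbb{R}^{n_{r_1}\times\cdots\times n_{r_e}}$, and $P_{\mathbf{C}}$ the unique permutation matrix with $P_{\mathbf{C}}\mathrm{vec}(\mathcal{Y})=\mathrm{vec}_{\mathbf{C}}(\mathcal{Y})$ for all $\mathcal{Y}\in\mathbb{R}^{n_{c_1}\times\cdots\times n_{c_{d-e}}}$. Then the matrix \[ \mathcal{A}_{\mathbf{R}\times\mathbf{C}}=P_{\mathbf{R}}\,\mathcal{A}_{\mathbf{r}\times\mathbf{c}}\,P_{\mathbf{C}}^T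 \] is a $B_{rows}$-by-$B_{cols}$ block matrix (its rows partitioned into consecutive groups, the $\mu$-th group, $\mu=\mathrm{ivec}(\mathbf{i},\mathbf{b}(\mathbf{r}))$, having $m^{(r_1)}_{i_1}\cdots m^{(r_e)}_{i_e}$ rows, and its columns partitioned analogously using $\mathbf{C}$) whose blocks satisfy, for every $\mathbf{1}\le\mathbf{k}\le\mathbf{b}$, \[ (\mathcal{A}_{\mathbf{R}\times\mathbf{C}})_{\mathbf{k}(\mathbf{r}),\mathbf{k}(\mathbf{c})}=(\mathcal{A}_{\mathbf{k}})_{\mathbf{r}\times\mathbf{c}}; \] that is, if $\mu=\mathrm{ivec}(\mathbf{k}(\mathbf{r}),\mathbf{b}(\mathbf{r}))$ and $\tau=\mathrm{ivec}(\mathbf{k}(\mathbf{c}),\mathbf{b}(\mathbf{c}))$, then the $(\mu,\tau)$ block of $\mathcal{A}_{\mathbf{R}\times\mathbf{C}}$ is the $\mathbf{r}\times\mathbf{c}$ unfolding of the $\mathbf{k}$-th block $\mathcal{A}_{\mathbf{k}}$ of $\mathcal{A}$.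
   Context: For an integer vector $\mathbf{v}$ and index vector $\mathbf{s}$, $\mathbf{v}(\mathbf{s})=(v_{s_1},v_{s_2},\ldots)$; inequalities between index vectors are componentwise. For $\mathbf{n}=(n_1,\ldots,n_d)$ and $\mathbf{1}\le\mathbf{i}\le\mathbf{n}$, $\mathrm{ivec}(\mathbf{i},\mathbf{n})=i_1+(i_2-1)n_1+\cdots+(i_d-1)n_1\cdots n_{d-1}$; $\mathrm{vec}(\mathcal{A})$ is the column vector whose entry $\mathrm{ivec}(\mathbf{i},\mathbf{n})$ is $\mathcal{A}(\mathbf{i})$. The $\mathbf{p}$-transpose $\mathcal{A}^{<\mathbf{p}>}\in\mathbb{R}^{n_{p_1}\times\cdots\times n_{p_d}}$ is defined by $\mathcal{A}^{<\mathbf{p}>}(i_{p_1},\ldots,i_{p_d})=\mathcal{A}(i_1,\ldots,i_d)$. The $\mathbf{r}\times\mathbf{c}$ unfolding (with $\mathbf{r}=\mathbf{p}(1:e)$, $\mathbf{c}=\mathbf{p}(e+1:d)$) of a tensor $\mathcal{X}$ of order $d$ with dimension vector $\mathbf{n}$ is the $(n_{r_1}\cdots n_{r_e})\times(n_{c_1}\cdots n_{c_{d-e}})$ matrix $\mathcal{X}_{\mathbf{r}\times\mathbf{c}}$ with $\mathcal{X}_{\mathbf{r}\times\mathbf{c}}(\alpha,\beta)=\mathcal{X}^{<\mathbf{p}>}(i_1,\ldots,i_e,j_1,\ldots,j_{d-e})$ where $\alpha=\mathrm{ivec}(\mathbf{i},\mathbf{n}(\mathbf{r}))$, $\beta=\mathrm{ivec}(\mathbf{j},\mathbf{n}(\mathbf{c}))$.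 A blocking of $\mathcal{A}$ is $\mathbf{M}=\{\mathbf{m}^{(1)},\ldots,\mathbf{m}^{(d)}\}$, each $\mathbf{m}^{(k)}=[m^{(k)}_1,\ldots,m^{(k)}_{b_k}]$ a vector of positive integers summing to $n_k$; with $\ell^{(k)}_j=m^{(k)}_1+\cdots+m^{(k)}_{j-1}+1$, $u^{(k)}_j=m^{(k)}_1+\cdots+m^{(k)}_j$, the block $\mathcal{A}_{\mathbf{k}}$ ($\mathbf{1}\le\mathbf{k}\le\mathbf{b}$) is $\mathcal{A}(\ell^{(1)}_{k_1}:u^{(1)}_{k_1},\ldots,\ell^{(d)}_{k_d}:u^{(d)}_{k_d})$. For a blocking $\mathbf{M}$ with block-count vector $\mathbf{b}$, $\mathrm{vec}_{\mathbf{M}}(\mathcal{A})$ stacks $\mathrm{vec}(\mathcal{A}_{\mathbf{i}})$ for $\mathbf{1}\le\mathbf{i}\le\mathbf{b}$ in order of increasing $\mathrm{ivec}(\mathbf{i},\mathbf{b})$. *)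

theory Defs
  imports "Jordan_Normal_Form.Matrix" "HOL-Combinatorics.Permutations"
begin

(* Conventions: tensor indices, index vectors, ivec values, block numbers and
   permutation entries are 1-based exactly as in the paper.  Matrix / vector
   entries of JNF types are 0-based, so paper entry alpha is JNF entry alpha-1.
   A tensor of order d with dimension vector n (a list) is a function
   nat list => real, of which only arguments i with idx_ok i n matter. *)

type_synonym tensor = "nat list \<Rightarrow> real"

definition sel :: "'a list \<Rightarrow> nat list \<Rightarrow> 'a list" where
  "sel v s = map (\<lambda>k. v ! (k - 1)) s"

definition idx_ok :: "nat list \<Rightarrow> nat list \<Rightarrow> bool" where
  "idx_ok i n \<longleftrightarrow> length i = length n \<and> (\<forall>k<length n. 1 \<le> i ! k \<and> i ! k \<le> n ! k)"

definition ivec :: "nat list \<Rightarrow> nat list \<Rightarrow> nat" where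
  "ivec i n = 1 + (\<Sum>k<length i. (i ! k - 1) * prod_list (take k n))"

definition univec :: "nat \<Rightarrow> nat list \<Rightarrow> nat list" where
  "univec alpha n = (THE i. idx_ok i n \<and> ivec i n = alpha)"

definition tvec :: "nat list \<Rightarrow> tensor \<Rightarrow> real vec" where
  "tvec n A = vec (prod_list n) (\<lambda>a. A (univec (a + 1) n))"

definition ptrans :: "nat list \<Rightarrow> tensor \<Rightarrow> tensor" where
  "ptrans p A = (\<lambda>j. A (THE i. length i = length p \<and> (\<forall>k<length p. i ! (p ! k - 1) = j ! k)))"

definition tunfold :: "nat list \<Rightarrow> nat list \<Rightarrow> nat \<Rightarrow> tensor \<Rightarrow> real mat" where
  "tunfold n p e X =
     (let r = take e p; c = drop e p in
      mat (prod_list (sel n r)) (prod_list (sel n c))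
        (\<lambda>(a, b). ptrans p X (univec (a + 1) (sel n r) @ univec (b + 1) (sel n c))))"

definition is_blocking :: "nat list list \<Rightarrow> nat list \<Rightarrow> bool" where
  "is_blocking M n \<longleftrightarrow> length M = length n \<and>
     (\<forall>k<length n. (\<forall>x\<in>set (M ! k). 0 < x) \<and> sum_list (M ! k) = n ! k)"

definition bcount :: "nat list list \<Rightarrow> nat list" where
  "bcount M = map length M"

definition blockdims :: "nat list list \<Rightarrow> nat list \<Rightarrow> nat list" where
  "blockdims M k = map (\<lambda>t. M ! t ! (k ! t - 1)) [0..<length M]"

(* block A_k = A(l_{k_1}:u_{k_1}, ..., l_{k_d}:u_{k_d}),
   l^{(t)}_j = m^{(t)}_1 + ... + m^{(t)}_{j-1} + 1 *)
definition tblock :: "nat list list \<Rightarrow> tensor \<Rightarrow> nat list \<Rightarrow> tensor" where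
  "tblock M A k = (\<lambda>i. A (map (\<lambda>t. sum_list (take (k ! t - 1) (M ! t)) + i ! t) [0..<length M]))"

definition bvec :: "nat list list \<Rightarrow> tensor \<Rightarrow> real vec" where
  "bvec M A = vec_of_list (concat (map (\<lambda>beta.
      let k = univec (beta + 1) (bcount M) in list_of_vec (tvec (blockdims M k) (tblock M A k)))
      [0..<prod_list (bcount M)]))"

definition perm_mat :: "nat \<Rightarrow> real mat \<Rightarrow> bool" where
  "perm_mat N P \<longleftrightarrow> (\<exists>\<sigma>. \<sigma> permutes {..<N} \<and> P = mat N N (\<lambda>(i, j). if \<sigma> i = j then 1 else 0))"

definition PM :: "nat list list \<Rightarrow> nat list \<Rightarrow> real mat" where
  "PM M n = (THE P. perm_mat (prod_list n) P \<and> (\<forall>X. P *\<^sub>v tvec n X = bvec M X))"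

definition group_sizes :: "nat list list \<Rightarrow> nat list" where
  "group_sizes Ms = map (\<lambda>mu. prod_list (blockdims Ms (univec (mu + 1) (bcount Ms))))
      [0..<prod_list (bcount Ms)]"

definition mblock :: "real mat \<Rightarrow> nat list \<Rightarrow> nat list \<Rightarrow> nat \<Rightarrow> nat \<Rightarrow> real mat" where
  "mblock X rs cs mu tau = mat (rs ! (mu - 1)) (cs ! (tau - 1))
     (\<lambda>(i, j). X $$ (sum_list (take (mu - 1) rs) + i, sum_list (take (tau - 1) cs) + j))"

end

theory Submission
  imports Defs
begin

text \<open>Each position of vec_M(X) holds the entry of X whose index is, coordinate by
  coordinate, the offset of its block plus its position inside the block. Hence P_M is the
  permutation matrix of the map from positions of vec_M(X) to positions of vec(X), and the
  (mu, tau) block of P_R A_{r x c} P_C^T has as (i, j) entry the unfolding of A at the index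
  built from the block index k and the local positions i and j. A p-transpose only permutes
  coordinates, so the block offsets can be pulled through it, which identifies this block
  with the r x c unfolding of A_k.\<close>

section \<open>Mixed-radix indices\<close>

text \<open>Zero-based forms of ivec and univec: univec0 computes the mixed-radix digits
  directly, so that univec is no longer a definite description.\<close>

definition ivec0 :: "nat list \<Rightarrow> nat list \<Rightarrow> nat" where
  "ivec0 i n = (\<Sum>k<length i. (i ! k - 1) * prod_list (take k n))"

fun univec0 :: "nat \<Rightarrow> nat list \<Rightarrow> nat list" where
  "univec0 a [] = []"
| "univec0 a (m # n) = (a mod m + 1) # univec0 (a div m) n"

lemma ivec_eq_Suc_ivec0: "ivec i n = Suc (ivec0 i n)"
  by (simp add: ivec_def ivec0_def)

lemma ivec0_Nil [simp]: "ivec0 [] n = 0"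
  by (simp add: ivec0_def)

lemma ivec0_Cons [simp]: "ivec0 (x # i) (a # n) = (x - 1) + a * ivec0 i n"
  unfolding ivec0_def length_Cons sum.lessThan_Suc_shift
  by (simp add: sum_distrib_left mult.assoc mult.left_commute)

lemma length_univec0 [simp]: "length (univec0 a n) = length n"
  by (induction n arbitrary: a) auto

lemma idx_ok_Nil [simp]: "idx_ok i [] \<longleftrightarrow> i = []"
  by (simp add: idx_ok_def)

lemma idx_ok_Cons:
  "idx_ok i (a # n) \<longleftrightarrow> (\<exists>x j. i = x # j \<and> 1 \<le> x \<and> x \<le> a \<and> idx_ok j n)"
  by (cases i) (auto simp: idx_ok_def nth_Cons split: nat.splits)

lemma idx_ok_Cons_Cons [simp]: "idx_ok (x # i) (a # n) \<longleftrightarrow> 1 \<le> x \<and> x \<le> a \<and> idx_ok i n"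
  by (simp add: idx_ok_Cons)

lemma ivec0_less_prod_list: "idx_ok i n \<Longrightarrow> ivec0 i n < prod_list n"
proof (induction n arbitrary: i)
  case (Cons a n)
  then obtain x j where i: "i = x # j" "1 \<le> x" "x \<le> a" "idx_ok j n"
    by (auto simp: idx_ok_Cons)
  with Cons.IH have "a * Suc (ivec0 j n) \<le> a * prod_list n"
    by (intro mult_le_mono2) (simp add: Suc_leI)
  with i show ?case by simp
qed simp

lemma idx_ok_univec0: "a < prod_list n \<Longrightarrow> idx_ok (univec0 a n) n"
proof (induction n arbitrary: a)
  case (Cons m n)
  then have "m > 0" by (cases m) auto
  with Cons.prems have "a div m < prod_list n"
    by (simp add: div_less_iff_less_mult mult.commute)
  with \<open>m > 0\<close> Cons.IH show ?case by (simp add: Suc_leI)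
qed simp

lemma ivec0_univec0: "a < prod_list n \<Longrightarrow> ivec0 (univec0 a n) n = a"
proof (induction n arbitrary: a)
  case (Cons m n)
  then have "m > 0" by (cases m) auto
  with Cons.prems have "a div m < prod_list n"
    by (simp add: div_less_iff_less_mult mult.commute)
  with \<open>m > 0\<close> Cons.IH show ?case by simp
qed simp

lemma univec0_ivec0: "idx_ok i n \<Longrightarrow> univec0 (ivec0 i n) n = i"
proof (induction n arbitrary: i)
  case (Cons a n)
  then obtain x j where i: "i = x # j" "1 \<le> x" "x \<le> a" "idx_ok j n"
    by (auto simp: idx_ok_Cons)
  then have "x - 1 < a" by simp
  then have "(x - 1 + a * ivec0 j n) mod a = x - 1" "(x - 1 + a * ivec0 j n) div a = ivec0 j n"
    by simp_all
  with Cons.IH i show ?case by simp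
qed simp

lemma univec_Suc: "a < prod_list n \<Longrightarrow> univec (Suc a) n = univec0 a n"
  unfolding univec_def
proof (rule the_equality)
  show "a < prod_list n \<Longrightarrow> idx_ok (univec0 a n) n \<and> ivec (univec0 a n) n = Suc a"
    by (simp add: idx_ok_univec0 ivec0_univec0 ivec_eq_Suc_ivec0)
qed (auto simp: ivec_eq_Suc_ivec0 univec0_ivec0)

lemma sum_univec0:
  "(\<Sum>a<prod_list n. f (univec0 a n)) = (\<Sum>i\<in>{i. idx_ok i n}. f i)"
  by (rule sum.reindex_bij_witness[of _ "\<lambda>i. ivec0 i n" "\<lambda>a. univec0 a n"])
     (auto simp: ivec0_univec0 idx_ok_univec0 univec0_ivec0 ivec0_less_prod_list)

section \<open>Permutation matrices\<close>

definition pmat :: "nat \<Rightarrow> (nat \<Rightarrow> nat) \<Rightarrow> real mat" where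
  "pmat N \<sigma> = mat N N (\<lambda>(i, j). if \<sigma> i = j then 1 else 0)"

lemma pmat_carrier [simp]: "pmat N \<sigma> \<in> carrier_mat N N"
  by (simp add: pmat_def)

lemma dim_pmat [simp]: "dim_row (pmat N \<sigma>) = N" "dim_col (pmat N \<sigma>) = N"
  by (simp_all add: pmat_def)

lemma perm_mat_pmat: "\<sigma> permutes {..<N} \<Longrightarrow> perm_mat N (pmat N \<sigma>)"
  by (auto simp: perm_mat_def pmat_def)

lemma perm_matE:
  assumes "perm_mat N P"
  obtains \<sigma> where "\<sigma> permutes {..<N}" "P = pmat N \<sigma>"
  using assms by (auto simp: perm_mat_def pmat_def)

lemma scalar_prod_row_pmat:
  assumes "\<sigma> permutes {..<N}" "i < N" "dim_vec v = N"
  shows "row (pmat N \<sigma>) i \<bullet> v = v $ \<sigma> i"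
proof -
  have "\<sigma> i < N" using assms permutes_in_image by fastforce
  have "row (pmat N \<sigma>) i \<bullet> v = (\<Sum>j\<in>{0..<N}. if \<sigma> i = j then v $ j else 0)"
    using assms unfolding scalar_prod_def pmat_def by (intro sum.cong) auto
  also have "\<dots> = v $ \<sigma> i" using \<open>\<sigma> i < N\<close> by simp
  finally show ?thesis .
qed

lemma pmat_mult_vec_index:
  "\<sigma> permutes {..<N} \<Longrightarrow> i < N \<Longrightarrow> dim_vec v = N \<Longrightarrow> (pmat N \<sigma> *\<^sub>v v) $ i = v $ \<sigma> i"
  by (simp add: scalar_prod_row_pmat)

lemma pmat_conj_index:
  assumes s: "\<sigma> permutes {..<N}" and t: "\<tau> permutes {..<K}"
    and U: "U \<in> carrier_mat N K" and i: "i < N" and j: "j < K"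
  shows "(pmat N \<sigma> * U * transpose_mat (pmat K \<tau>)) $$ (i, j) = U $$ (\<sigma> i, \<tau> j)"
proof -
  have dU: "dim_row U = N" "dim_col U = K" using U by auto
  have si: "\<sigma> i < N" using s i permutes_in_image by fastforce
  have tj: "\<tau> j < K" using t j permutes_in_image by fastforce
  have PU: "(pmat N \<sigma> * U) $$ (i, b) = U $$ (\<sigma> i, b)" if b: "b < K" for b
  proof -
    have "(pmat N \<sigma> * U) $$ (i, b) = row (pmat N \<sigma>) i \<bullet> col U b"
      using i b dU by (subst index_mult_mat) auto
    also have "\<dots> = col U b $ \<sigma> i" using scalar_prod_row_pmat[OF s i, of "col U b"] dU by simp
    also have "\<dots> = U $$ (\<sigma> i, b)" using si b dU by simp
    finally show ?thesis .
  qed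
  have dPU: "dim_row (pmat N \<sigma> * U) = N" "dim_col (pmat N \<sigma> * U) = K" using dU by simp_all
  have "(pmat N \<sigma> * U * transpose_mat (pmat K \<tau>)) $$ (i, j)
      = row (pmat N \<sigma> * U) i \<bullet> col (transpose_mat (pmat K \<tau>)) j"
    using i j dPU by (subst index_mult_mat) auto
  also have "col (transpose_mat (pmat K \<tau>)) j = row (pmat K \<tau>) j"
    using j by (subst col_transpose) auto
  also have "row (pmat N \<sigma> * U) i \<bullet> row (pmat K \<tau>) j = row (pmat K \<tau>) j \<bullet> row (pmat N \<sigma> * U) i"
  proof (rule comm_scalar_prod[of _ K])
    show "row (pmat N \<sigma> * U) i \<in> carrier_vec K" by (rule carrier_vecI) (simp only: index_row(2) dPU(2))
    show "row (pmat K \<tau>) j \<in> carrier_vec K" by (rule carrier_vecI) (simp only: index_row(2) dim_pmat)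
  qed
  also have "\<dots> = row (pmat N \<sigma> * U) i $ \<tau> j"
    using scalar_prod_row_pmat[OF t j] dPU by simp
  also have "\<dots> = (pmat N \<sigma> * U) $$ (i, \<tau> j)" using tj i dPU by (subst index_row) auto
  also have "\<dots> = U $$ (\<sigma> i, \<tau> j)" using PU tj by simp
  finally show ?thesis .
qed

section \<open>Consecutive groups\<close>

text \<open>Zero-based (group, offset) of position q when a range is cut into consecutive
  groups of sizes gs.\<close>

fun group_pos :: "nat list \<Rightarrow> nat \<Rightarrow> nat \<times> nat" where
  "group_pos [] q = (0, q)"
| "group_pos (g # gs) q =
    (if q < g then (0, q) else (let (b, i) = group_pos gs (q - g) in (Suc b, i)))"

lemma group_pos_correct:
  "q < sum_list gs \<Longrightarrow> fst (group_pos gs q) < length gs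
    \<and> snd (group_pos gs q) < gs ! fst (group_pos gs q)
    \<and> q = sum_list (take (fst (group_pos gs q)) gs) + snd (group_pos gs q)"
proof (induction gs arbitrary: q)
  case (Cons g gs)
  show ?case
  proof (cases "q < g")
    case False
    with Cons.prems have "q - g < sum_list gs" by simp
    from Cons.IH[OF this] False show ?thesis by (auto simp: split_beta)
  qed simp
qed simp

lemma group_posE:
  assumes "q < sum_list (gs :: nat list)"
  obtains b i where "b < length gs" "i < gs ! b" "q = sum_list (take b gs) + i"
  using group_pos_correct[OF assms] by blast

lemma group_pos_offset:
  "b < length gs \<Longrightarrow> i < gs ! b \<Longrightarrow> group_pos gs (sum_list (take b gs) + i) = (b, i)"
proof (induction gs arbitrary: b)
  case (Cons g gs)
  then show ?case by (cases b) auto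
qed simp

lemma offset_less_sum_list:
  "b < length gs \<Longrightarrow> i < gs ! b \<Longrightarrow> sum_list (take b gs) + i < sum_list (gs :: nat list)"
proof (induction gs arbitrary: b)
  case (Cons g gs)
  show ?case
  proof (cases b)
    case 0
    then show ?thesis using Cons.prems by (simp add: trans_less_add1)
  next
    case (Suc b')
    then show ?thesis using Cons.IH[of b'] Cons.prems by simp
  qed
qed simp

lemma offset_inj:
  assumes "b < length gs" "i < gs ! b" "b' < length gs" "i' < gs ! b'"
    and "sum_list (take b gs) + i = sum_list (take b' gs) + (i' :: nat)"
  shows "b = b' \<and> i = i'"
proof -
  have "(b, i) = (b', i')"
    by (metis assms group_pos_offset)
  then show ?thesis by simp
qed

lemma nth_concat_offset:
  "b < length L \<Longrightarrow> i < length (L ! b) \<Longrightarrow>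
    concat L ! (sum_list (map length (take b L)) + i) = L ! b ! i"
proof (induction L arbitrary: b)
  case (Cons x L)
  then show ?case by (cases b) (auto simp: nth_append)
qed simp

section \<open>p-transposes\<close>

lemma perm_list_nth_bounds:
  assumes "set p = {1..length p}" "k < length p"
  shows "1 \<le> p ! k" "p ! k - 1 < length p"
proof -
  have "p ! k \<in> {1..length p}" using assms nth_mem[OF assms(2)] by blast
  then show "1 \<le> p ! k" "p ! k - 1 < length p" by auto
qed

lemma ptrans_eqI:
  assumes p: "distinct p" "set p = {1..length p}"
    and i: "length i = length p" "\<forall>k<length p. i ! (p ! k - 1) = j ! k"
  shows "ptrans p X j = X i"
proof -
  have "i' = i" if i': "length i' = length p" "\<forall>k<length p. i' ! (p ! k - 1) = j ! k" for i'
  proof (rule nth_equalityI)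
    fix u assume "u < length i'"
    with i' p have "Suc u \<in> set p" by auto
    then obtain k where k: "k < length p" "p ! k = Suc u" by (auto simp: in_set_conv_nth)
    then have "i' ! u = j ! k" "i ! u = j ! k" using i i' by (metis diff_Suc_1)+
    then show "i' ! u = i ! u" by simp
  qed (use i i' in simp)
  with i have "(THE i. length i = length p \<and> (\<forall>k<length p. i ! (p ! k - 1) = j ! k)) = i"
    by (intro the_equality) blast+
  then show ?thesis unfolding ptrans_def by simp
qed

lemma ex_ptrans_preimage:
  assumes p: "distinct p" "set p = {1..length p}"
  shows "\<exists>i. length i = length p \<and> (\<forall>k<length p. i ! (p ! k - 1) = j ! k)"
proof -
  define pos where "pos u = (THE k. k < length p \<and> p ! k = Suc u)" for u
  define i where "i = map (\<lambda>u. j ! pos u) [0..<length p]"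
  have "i ! (p ! k - 1) = j ! k" if k: "k < length p" for k
  proof -
    have "Suc (p ! k - 1) = p ! k" using perm_list_nth_bounds(1)[OF p(2) k] by simp
    then have "pos (p ! k - 1) = k"
      unfolding pos_def using k nth_eq_iff_index_eq[OF p(1) _ k] by (intro the_equality) auto
    then show ?thesis using perm_list_nth_bounds(2)[OF p(2) k] by (simp add: i_def)
  qed
  then show ?thesis by (intro exI[of _ i]) (simp add: i_def)
qed

lemma ptrans_map_coords:
  assumes p: "distinct p" "set p = {1..length p}"
  shows "ptrans p (\<lambda>i. X (map (\<lambda>u. f u (i ! u)) [0..<length p])) j
       = ptrans p X (map (\<lambda>s. f (p ! s - 1) (j ! s)) [0..<length p])"
proof -
  obtain i where i: "length i = length p" "\<forall>k<length p. i ! (p ! k - 1) = j ! k"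
    using ex_ptrans_preimage[OF p] by blast
  define i' where "i' = map (\<lambda>u. f u (i ! u)) [0..<length p]"
  have "i' ! (p ! k - 1) = map (\<lambda>s. f (p ! s - 1) (j ! s)) [0..<length p] ! k"
    if k: "k < length p" for k
  proof -
    have "i' ! (p ! k - 1) = f (p ! k - 1) (i ! (p ! k - 1))"
      using perm_list_nth_bounds(2)[OF p(2) k] by (simp add: i'_def)
    with i k show ?thesis by simp
  qed
  then have i': "length i' = length p"
      "\<forall>k<length p. i' ! (p ! k - 1) = map (\<lambda>s. f (p ! s - 1) (j ! s)) [0..<length p] ! k"
    by (simp_all add: i'_def)
  have "ptrans p (\<lambda>i. X (map (\<lambda>u. f u (i ! u)) [0..<length p])) j = X i'"
    unfolding i'_def by (rule ptrans_eqI[OF p i, where X = "\<lambda>i. X (map (\<lambda>u. f u (i ! u)) [0..<length p])"])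
  also have "\<dots> = ptrans p X (map (\<lambda>s. f (p ! s - 1) (j ! s)) [0..<length p])"
    by (rule ptrans_eqI[OF p i', where X = X, symmetric])
  finally show ?thesis .
qed

section \<open>Blocks and block-wise vectorization\<close>

definition global_index :: "nat list list \<Rightarrow> nat list \<Rightarrow> nat list \<Rightarrow> nat list" where
  "global_index Ms kk ii = map (\<lambda>t. sum_list (take (kk ! t - 1) (Ms ! t)) + ii ! t) [0..<length Ms]"

lemma tblock_eq_global_index: "tblock Ms X kk ii = X (global_index Ms kk ii)"
  by (simp add: tblock_def global_index_def)

lemma length_global_index [simp]: "length (global_index Ms kk ii) = length Ms"
  by (simp add: global_index_def)

lemma length_blockdims [simp]: "length (blockdims Ms kk) = length Ms"
  by (simp add: blockdims_def)

lemma nth_blockdims [simp]: "t < length Ms \<Longrightarrow> blockdims Ms kk ! t = Ms ! t ! (kk ! t - 1)"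
  by (simp add: blockdims_def)

lemma length_bcount [simp]: "length (bcount Ms) = length Ms"
  by (simp add: bcount_def)

lemma nth_bcount [simp]: "t < length Ms \<Longrightarrow> bcount Ms ! t = length (Ms ! t)"
  by (simp add: bcount_def)

lemma blocking_coord:
  assumes "idx_ok kk (bcount Ms)" "idx_ok ii (blockdims Ms kk)" "t < length Ms"
  shows "kk ! t - 1 < length (Ms ! t)" "ii ! t - 1 < Ms ! t ! (kk ! t - 1)"
    "global_index Ms kk ii ! t = Suc (sum_list (take (kk ! t - 1) (Ms ! t)) + (ii ! t - 1))"
  using assms by (auto simp: idx_ok_def global_index_def)

lemma idx_ok_global_index:
  assumes B: "is_blocking Ms ns" and kk: "idx_ok kk (bcount Ms)" and ii: "idx_ok ii (blockdims Ms kk)"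
  shows "idx_ok (global_index Ms kk ii) ns"
  unfolding idx_ok_def
proof (intro conjI allI impI)
  show "length (global_index Ms kk ii) = length ns" using B by (simp add: is_blocking_def)
  fix t assume "t < length ns"
  with B have t: "t < length Ms" and "sum_list (Ms ! t) = ns ! t"
    by (auto simp: is_blocking_def)
  with offset_less_sum_list[OF blocking_coord(1,2)[OF kk ii t]]
  show "1 \<le> global_index Ms kk ii ! t" "global_index Ms kk ii ! t \<le> ns ! t"
    by (simp_all add: blocking_coord(3)[OF kk ii t])
qed

lemma global_index_inj:
  assumes kk: "idx_ok kk (bcount Ms)" and ii: "idx_ok ii (blockdims Ms kk)"
    and kk': "idx_ok kk' (bcount Ms)" and ii': "idx_ok ii' (blockdims Ms kk')"
    and eq: "global_index Ms kk ii = global_index Ms kk' ii'"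
  shows "kk = kk'" "ii = ii'"
proof -
  have "kk ! t - 1 = kk' ! t - 1 \<and> ii ! t - 1 = ii' ! t - 1" if t: "t < length Ms" for t
    using offset_inj[OF blocking_coord(1,2)[OF kk ii t] blocking_coord(1,2)[OF kk' ii' t]]
      arg_cong[OF eq, of "\<lambda>g. g ! t"]
    by (simp add: blocking_coord(3)[OF kk ii t] blocking_coord(3)[OF kk' ii' t])
  moreover have "1 \<le> kk ! t" "1 \<le> kk' ! t" "1 \<le> ii ! t" "1 \<le> ii' ! t" if "t < length Ms" for t
    using kk kk' ii ii' that by (auto simp: idx_ok_def)
  ultimately have "kk ! t = kk' ! t \<and> ii ! t = ii' ! t" if "t < length Ms" for t
    using that by fastforce
  moreover have "length kk = length Ms" "length kk' = length Ms"
      "length ii = length Ms" "length ii' = length Ms"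
    using kk kk' ii ii' by (auto simp: idx_ok_def)
  ultimately show "kk = kk'" "ii = ii'" by (auto intro: nth_equalityI)
qed

text \<open>Tensor index of entry i of block b, where b and i are zero-based positions in the
  column-major orders of the blocks and of the entries of block b.\<close>

definition block_entry :: "nat list list \<Rightarrow> nat \<Rightarrow> nat \<Rightarrow> nat list" where
  "block_entry Ms b i =
     (let kk = univec0 b (bcount Ms) in global_index Ms kk (univec0 i (blockdims Ms kk)))"

lemma length_group_sizes [simp]: "length (group_sizes Ms) = prod_list (bcount Ms)"
  by (simp add: group_sizes_def)

lemma nth_group_sizes:
  "b < prod_list (bcount Ms) \<Longrightarrow>
    group_sizes Ms ! b = prod_list (blockdims Ms (univec0 b (bcount Ms)))"
  by (simp add: group_sizes_def univec_Suc)

lemma idx_ok_block_entry: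
  assumes "is_blocking Ms ns" "b < prod_list (bcount Ms)" "i < group_sizes Ms ! b"
  shows "idx_ok (block_entry Ms b i) ns"
  using assms unfolding block_entry_def Let_def
  by (intro idx_ok_global_index idx_ok_univec0) (simp_all add: nth_group_sizes)

lemma block_entry_inj:
  assumes b: "b < prod_list (bcount Ms)" "i < group_sizes Ms ! b"
    and b': "b' < prod_list (bcount Ms)" "i' < group_sizes Ms ! b'"
    and eq: "block_entry Ms b i = block_entry Ms b' i'"
  shows "b = b'" "i = i'"
proof -
  have ok: "idx_ok (univec0 b (bcount Ms)) (bcount Ms)"
      "idx_ok (univec0 i (blockdims Ms (univec0 b (bcount Ms)))) (blockdims Ms (univec0 b (bcount Ms)))"
      "idx_ok (univec0 b' (bcount Ms)) (bcount Ms)"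
      "idx_ok (univec0 i' (blockdims Ms (univec0 b' (bcount Ms)))) (blockdims Ms (univec0 b' (bcount Ms)))"
    using b b' by (simp_all add: idx_ok_univec0 nth_group_sizes)
  note inj = global_index_inj[OF ok eq[unfolded block_entry_def Let_def]]
  have "b = ivec0 (univec0 b (bcount Ms)) (bcount Ms)" using ivec0_univec0[OF b(1)] by simp
  also have "\<dots> = b'" using inj(1) ivec0_univec0[OF b'(1)] by simp
  finally show "b = b'" .
  have "i < prod_list (blockdims Ms (univec0 b (bcount Ms)))"
      "i' < prod_list (blockdims Ms (univec0 b (bcount Ms)))"
    using b b' \<open>b = b'\<close> by (simp_all add: nth_group_sizes)
  with inj(2) \<open>b = b'\<close> show "i = i'" by (metis ivec0_univec0)
qed

lemma dim_bvec: "dim_vec (bvec Ms X) = sum_list (group_sizes Ms)"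
  unfolding bvec_def group_sizes_def by (simp add: length_concat tvec_def comp_def Let_def)

lemma bvec_index:
  assumes b: "b < prod_list (bcount Ms)" and i: "i < group_sizes Ms ! b"
  shows "bvec Ms X $ (sum_list (take b (group_sizes Ms)) + i) = X (block_entry Ms b i)"
proof -
  define N where "N = prod_list (bcount Ms)"
  define F where "F = (\<lambda>beta. let k = univec (beta + 1) (bcount Ms) in
    list_of_vec (tvec (blockdims Ms k) (tblock Ms X k)))"
  have lenF: "length (F beta) = group_sizes Ms ! beta" if "beta < N" for beta
    using that by (simp add: F_def N_def tvec_def group_sizes_def Let_def)
  have "map length (take b (map F [0..<N])) = take b (group_sizes Ms)"
    by (rule nth_equalityI) (simp_all add: N_def lenF)
  moreover have "bvec Ms X = vec_of_list (concat (map F [0..<N]))"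
    by (simp add: bvec_def F_def N_def)
  ultimately have "bvec Ms X $ (sum_list (take b (group_sizes Ms)) + i)
      = concat (map F [0..<N]) ! (sum_list (map length (take b (map F [0..<N]))) + i)"
    by (simp add: vec_of_list_index)
  also have "\<dots> = F b ! i"
    using nth_concat_offset[of b "map F [0..<N]" i] b i lenF by (simp add: N_def)
  also have "\<dots> = X (block_entry Ms b i)"
    using b i nth_group_sizes[OF b]
    by (simp add: F_def list_of_vec_index tvec_def univec_Suc tblock_eq_global_index
        block_entry_def Let_def)
  finally show ?thesis .
qed

lemma idx_ok_set_Cons:
  "{kk. idx_ok kk (a # b)} = (\<lambda>(x, kk). x # kk) ` ({1..a} \<times> {kk. idx_ok kk b})"
  by (auto simp: idx_ok_Cons image_iff)

lemma blockdims_Cons: "blockdims (m # Ms) (x # kk) = m ! (x - 1) # blockdims Ms kk"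
  by (rule nth_equalityI) (auto simp: nth_Cons split: nat.splits)

lemma sum_nth_pred_eq_sum_list: "(\<Sum>x\<in>{1..length m}. m ! (x - 1)) = sum_list (m :: nat list)"
proof -
  have "(\<Sum>x\<in>{1..length m}. m ! (x - 1)) = (\<Sum>x<length m. m ! x)"
    by (rule sum.reindex_bij_witness[of _ Suc "\<lambda>x. x - 1"]) auto
  also have "\<dots> = sum_list m" by (simp add: sum_list_sum_nth atLeast0LessThan)
  finally show ?thesis .
qed

lemma sum_prod_blockdims:
  "(\<Sum>kk\<in>{kk. idx_ok kk (bcount Ms)}. prod_list (blockdims Ms kk)) = prod_list (map sum_list Ms)"
proof (induction Ms)
  case Nil
  then show ?case by (simp add: blockdims_def bcount_def)
next
  case (Cons m Ms)
  let ?S = "{kk. idx_ok kk (bcount Ms)}"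
  have inj: "inj_on (\<lambda>(x, kk). x # kk) ({1..length m} \<times> ?S)"
    by (auto simp: inj_on_def)
  have "(\<Sum>kk\<in>{kk. idx_ok kk (bcount (m # Ms))}. prod_list (blockdims (m # Ms) kk))
      = (\<Sum>(x, kk)\<in>{1..length m} \<times> ?S. prod_list (blockdims (m # Ms) (x # kk)))"
    by (simp only: bcount_def list.map idx_ok_set_Cons sum.reindex[OF inj[unfolded bcount_def]])
       (simp add: case_prod_unfold comp_def bcount_def)
  also have "\<dots> = (\<Sum>x\<in>{1..length m}. m ! (x - 1)) * (\<Sum>kk\<in>?S. prod_list (blockdims Ms kk))"
    by (simp add: blockdims_Cons sum.cartesian_product sum_product)
  also have "\<dots> = sum_list m * prod_list (map sum_list Ms)"
    using Cons.IH sum_nth_pred_eq_sum_list[of m] by simp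
  finally show ?case by simp
qed

lemma sum_group_sizes:
  assumes "is_blocking Ms ns"
  shows "sum_list (group_sizes Ms) = prod_list ns"
proof -
  have "map sum_list Ms = ns"
    using assms by (intro nth_equalityI) (auto simp: is_blocking_def)
  moreover have "sum_list (group_sizes Ms)
      = (\<Sum>b<prod_list (bcount Ms). prod_list (blockdims Ms (univec0 b (bcount Ms))))"
    by (simp add: group_sizes_def sum_list_sum_nth atLeast0LessThan univec_Suc)
  moreover have "\<dots> = (\<Sum>kk\<in>{kk. idx_ok kk (bcount Ms)}. prod_list (blockdims Ms kk))"
    by (rule sum_univec0)
  ultimately show ?thesis by (simp add: sum_prod_blockdims)
qed

section \<open>The permutation matrix of a blocking\<close>

text \<open>Position q of vec_M(X) holds the entry at position bperm q of vec(X).\<close>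

definition bperm :: "nat list list \<Rightarrow> nat list \<Rightarrow> nat \<Rightarrow> nat" where
  "bperm Ms ns q = (if q < prod_list ns
     then (case group_pos (group_sizes Ms) q of (b, i) \<Rightarrow> ivec0 (block_entry Ms b i) ns)
     else q)"

lemma bperm_offset:
  assumes B: "is_blocking Ms ns" and b: "b < prod_list (bcount Ms)" and i: "i < group_sizes Ms ! b"
  shows "bperm Ms ns (sum_list (take b (group_sizes Ms)) + i) = ivec0 (block_entry Ms b i) ns"
  using offset_less_sum_list[of b "group_sizes Ms" i] group_pos_offset[of b "group_sizes Ms" i]
    b i sum_group_sizes[OF B]
  by (simp add: bperm_def)

lemma blocked_positionE:
  assumes "is_blocking Ms ns" "q < prod_list ns"
  obtains b i where "b < prod_list (bcount Ms)" "i < group_sizes Ms ! b"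
    "q = sum_list (take b (group_sizes Ms)) + i"
proof -
  from assms have "q < sum_list (group_sizes Ms)" by (simp add: sum_group_sizes)
  then obtain b i where "b < length (group_sizes Ms)" "i < group_sizes Ms ! b"
      "q = sum_list (take b (group_sizes Ms)) + i"
    by (rule group_posE)
  with that show ?thesis by simp
qed

lemma bperm_permutes:
  assumes B: "is_blocking Ms ns"
  shows "bperm Ms ns permutes {..<prod_list ns}"
proof -
  let ?N = "prod_list ns" and ?gs = "group_sizes Ms"
  have into: "bperm Ms ns q < ?N" if "q < ?N" for q
    using that by (auto elim!: blocked_positionE[OF B]
        simp: bperm_offset[OF B] idx_ok_block_entry[OF B] ivec0_less_prod_list)
  have "inj_on (bperm Ms ns) {..<?N}"
  proof (rule inj_onI)
    fix q q' assume "q \<in> {..<?N}" "q' \<in> {..<?N}" and eq: "bperm Ms ns q = bperm Ms ns q'"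
    then obtain b i b' i' where
      bi: "b < prod_list (bcount Ms)" "i < ?gs ! b" "q = sum_list (take b ?gs) + i" and
      bi': "b' < prod_list (bcount Ms)" "i' < ?gs ! b'" "q' = sum_list (take b' ?gs) + i'"
      by (metis blocked_positionE[OF B] lessThan_iff)
    have "ivec0 (block_entry Ms b i) ns = ivec0 (block_entry Ms b' i') ns"
      using eq bperm_offset[OF B bi(1,2)] bperm_offset[OF B bi'(1,2)] bi(3) bi'(3) by simp
    then have "block_entry Ms b i = block_entry Ms b' i'"
      by (metis univec0_ivec0 idx_ok_block_entry[OF B bi(1,2)] idx_ok_block_entry[OF B bi'(1,2)])
    with block_entry_inj[OF bi(1,2) bi'(1,2)] show "q = q'" using bi(3) bi'(3) by simp
  qed
  moreover from this into have "bperm Ms ns ` {..<?N} = {..<?N}"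
    by (intro endo_inj_surj) auto
  ultimately show ?thesis
    by (intro bij_imp_permutes) (auto simp: bij_betw_def bperm_def)
qed

lemma pmat_bperm_mult_tvec:
  assumes B: "is_blocking Ms ns"
  shows "pmat (prod_list ns) (bperm Ms ns) *\<^sub>v tvec ns X = bvec Ms X"
proof (rule eq_vecI)
  show "dim_vec (pmat (prod_list ns) (bperm Ms ns) *\<^sub>v tvec ns X) = dim_vec (bvec Ms X)"
    using sum_group_sizes[OF B] by (simp add: dim_bvec)
  fix q assume "q < dim_vec (bvec Ms X)"
  then have q: "q < prod_list ns" using sum_group_sizes[OF B] by (simp add: dim_bvec)
  then obtain b i where bi: "b < prod_list (bcount Ms)" "i < group_sizes Ms ! b"
      "q = sum_list (take b (group_sizes Ms)) + i"
    by (rule blocked_positionE[OF B])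
  note ok = idx_ok_block_entry[OF B bi(1,2)]
  have "(pmat (prod_list ns) (bperm Ms ns) *\<^sub>v tvec ns X) $ q = tvec ns X $ bperm Ms ns q"
    using pmat_mult_vec_index[OF bperm_permutes[OF B] q] by (simp add: tvec_def)
  also have "\<dots> = X (block_entry Ms b i)"
    using bi bperm_offset[OF B bi(1,2)] ivec0_less_prod_list[OF ok]
    by (simp add: tvec_def univec_Suc univec0_ivec0[OF ok])
  also have "\<dots> = bvec Ms X $ q" using bvec_index[OF bi(1,2)] bi(3) by simp
  finally show "(pmat (prod_list ns) (bperm Ms ns) *\<^sub>v tvec ns X) $ q = bvec Ms X $ q" .
qed

text \<open>Uniqueness: applying P to the vectorization of the tensor whose entries are their
  own zero-based linear positions reads off the permutation underlying P.\<close>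

lemma PM_eq_pmat_bperm:
  assumes B: "is_blocking Ms ns"
  shows "PM Ms ns = pmat (prod_list ns) (bperm Ms ns)"
  unfolding PM_def
proof (rule the_equality)
  let ?N = "prod_list ns"
  show "perm_mat ?N (pmat ?N (bperm Ms ns)) \<and> (\<forall>X. pmat ?N (bperm Ms ns) *\<^sub>v tvec ns X = bvec Ms X)"
    using perm_mat_pmat[OF bperm_permutes[OF B]] pmat_bperm_mult_tvec[OF B] by blast
  fix P assume P: "perm_mat ?N P \<and> (\<forall>X. P *\<^sub>v tvec ns X = bvec Ms X)"
  then obtain \<tau> where \<tau>: "\<tau> permutes {..<?N}" and P_eq: "P = pmat ?N \<tau>"
    by (auto elim: perm_matE)
  define X where "X i = real (ivec0 i ns)" for i
  have tv: "tvec ns X $ a = real a" if "a < ?N" for a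
    using that by (simp add: tvec_def X_def univec_Suc ivec0_univec0)
  have "\<tau> q = bperm Ms ns q" if q: "q < ?N" for q
  proof -
    have "\<tau> q < ?N" "bperm Ms ns q < ?N"
      using \<tau> bperm_permutes[OF B] q permutes_in_image by fastforce+
    then have "real (\<tau> q) = (P *\<^sub>v tvec ns X) $ q"
      using pmat_mult_vec_index[OF \<tau> q] tv P_eq by (simp add: tvec_def)
    also have "\<dots> = (pmat ?N (bperm Ms ns) *\<^sub>v tvec ns X) $ q"
      using P pmat_bperm_mult_tvec[OF B] by simp
    also have "\<dots> = real (bperm Ms ns q)"
      using pmat_mult_vec_index[OF bperm_permutes[OF B] q] tv \<open>bperm Ms ns q < ?N\<close>
      by (simp add: tvec_def)
    finally show ?thesis by simp
  qed
  moreover have "\<tau> q = bperm Ms ns q" if "q \<notin> {..<?N}" for q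
    using that \<tau> bperm_permutes[OF B] by (simp add: permutes_def)
  ultimately have "\<tau> = bperm Ms ns" by (metis lessThan_iff ext)
  with P_eq show "P = pmat ?N (bperm Ms ns)" by simp
qed

section \<open>Selections and unfoldings\<close>

lemma length_sel [simp]: "length (sel v s) = length s"
  by (simp add: sel_def)

lemma nth_sel [simp]: "t < length s \<Longrightarrow> sel v s ! t = v ! (s ! t - 1)"
  by (simp add: sel_def)

lemma sel_take_append_drop: "sel v (take e s) @ sel v (drop e s) = sel v s"
  by (simp add: sel_def flip: map_append)

lemma perm_take_drop_bounds:
  assumes "set p = {1..d}"
  shows "\<forall>x\<in>set (take e p). 1 \<le> x \<and> x \<le> d" "\<forall>x\<in>set (drop e p). 1 \<le> x \<and> x \<le> d"
  using assms by (auto dest: in_set_takeD in_set_dropD)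

lemma sel_index_bounds:
  "\<forall>x\<in>set s. 1 \<le> x \<and> x \<le> length v \<Longrightarrow> t < length s \<Longrightarrow> s ! t - 1 < length v"
  using nth_mem by fastforce

lemma blocking_sel:
  assumes B: "is_blocking M n" and s: "\<forall>x\<in>set s. 1 \<le> x \<and> x \<le> length n"
  shows "is_blocking (sel M s) (sel n s)"
  using B sel_index_bounds[OF s] by (auto simp: is_blocking_def)

lemma bcount_sel:
  assumes "\<forall>x\<in>set s. 1 \<le> x \<and> x \<le> length M"
  shows "bcount (sel M s) = sel (bcount M) s"
  by (rule nth_equalityI) (auto dest: sel_index_bounds[OF assms])

lemma blockdims_sel:
  assumes "\<forall>x\<in>set s. 1 \<le> x \<and> x \<le> length M"
  shows "blockdims (sel M s) (sel k s) = sel (blockdims M k) s"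
  by (rule nth_equalityI) (auto dest: sel_index_bounds[OF assms])

lemma idx_ok_sel:
  assumes "idx_ok k b" "\<forall>x\<in>set s. 1 \<le> x \<and> x \<le> length b"
  shows "idx_ok (sel k s) (sel b s)"
  using assms sel_index_bounds[OF assms(2)] by (auto simp: idx_ok_def)

lemma block_entry_sel:
  assumes s: "\<forall>x\<in>set s. 1 \<le> x \<and> x \<le> length M" and k: "idx_ok k (bcount M)"
  defines "b \<equiv> ivec0 (sel k s) (sel (bcount M) s)"
  shows "b < prod_list (bcount (sel M s))"
    and "group_sizes (sel M s) ! b = prod_list (sel (blockdims M k) s)"
    and "block_entry (sel M s) b i = global_index (sel M s) (sel k s) (univec0 i (sel (blockdims M k) s))"
proof -
  have ok: "idx_ok (sel k s) (bcount (sel M s))"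
    using idx_ok_sel[OF k] s by (simp add: bcount_sel[OF s])
  then show "b < prod_list (bcount (sel M s))"
    using ivec0_less_prod_list by (simp add: b_def bcount_sel[OF s])
  with ok show "group_sizes (sel M s) ! b = prod_list (sel (blockdims M k) s)"
    "block_entry (sel M s) b i = global_index (sel M s) (sel k s) (univec0 i (sel (blockdims M k) s))"
    by (simp_all add: b_def nth_group_sizes block_entry_def Let_def univec0_ivec0
        flip: bcount_sel[OF s] blockdims_sel[OF s])
qed

lemma global_index_append:
  assumes "length kk1 = length Ms1" "length ii1 = length Ms1"
  shows "global_index (Ms1 @ Ms2) (kk1 @ kk2) (ii1 @ ii2)
    = global_index Ms1 kk1 ii1 @ global_index Ms2 kk2 ii2"
  using assms by (intro nth_equalityI) (auto simp: global_index_def nth_append)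

lemma ptrans_tblock:
  assumes p: "distinct p" "set p = {1..length Ms}"
  shows "ptrans p (tblock Ms X kk) j = ptrans p X (global_index (sel Ms p) (sel kk p) j)"
proof -
  have lp: "length p = length Ms" using p distinct_card by fastforce
  define off where "off u x = sum_list (take (kk ! u - 1) (Ms ! u)) + x" for u x
  have "tblock Ms X kk = (\<lambda>i. X (map (\<lambda>u. off u (i ! u)) [0..<length p]))"
    by (simp add: tblock_def off_def lp)
  moreover have "map (\<lambda>s. off (p ! s - 1) (j ! s)) [0..<length p]
      = global_index (sel Ms p) (sel kk p) j"
    by (simp add: global_index_def sel_def off_def)
  ultimately show ?thesis
    using ptrans_map_coords[OF p[folded lp], where X = X and f = off and j = j] by simp
qed

lemma tunfold_carrier:
  "tunfold n p e X \<in> carrier_mat (prod_list (sel n (take e p))) (prod_list (sel n (drop e p)))"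
  by (simp add: tunfold_def Let_def)

lemma tunfold_index:
  "a < prod_list (sel n (take e p)) \<Longrightarrow> b < prod_list (sel n (drop e p)) \<Longrightarrow>
    tunfold n p e X $$ (a, b) = ptrans p X (univec0 a (sel n (take e p)) @ univec0 b (sel n (drop e p)))"
  by (simp add: tunfold_def Let_def univec_Suc)

lemma tunfold_global_index:
  assumes B: "is_blocking M n" and p: "distinct p" "set p = {1..length n}"
    and k: "idx_ok k (bcount M)"
    and I: "idx_ok I (sel (blockdims M k) (take e p))"
    and J: "idx_ok J (sel (blockdims M k) (drop e p))"
  shows "tunfold n p e A $$
      (ivec0 (global_index (sel M (take e p)) (sel k (take e p)) I) (sel n (take e p)),
       ivec0 (global_index (sel M (drop e p)) (sel k (drop e p)) J) (sel n (drop e p)))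
    = ptrans p (tblock M A k) (I @ J)"
proof -
  have lM: "length M = length n" using B by (simp add: is_blocking_def)
  note bounds = perm_take_drop_bounds[OF p(2)]
  have bounds_M: "\<forall>x\<in>set (take e p). 1 \<le> x \<and> x \<le> length M"
      "\<forall>x\<in>set (drop e p). 1 \<le> x \<and> x \<le> length M"
    using bounds lM by simp_all
  have okI: "idx_ok (global_index (sel M (take e p)) (sel k (take e p)) I) (sel n (take e p))"
    using idx_ok_global_index[OF blocking_sel[OF B bounds(1)]] idx_ok_sel[OF k] bounds_M(1) I
    by (simp add: bcount_sel blockdims_sel)
  have okJ: "idx_ok (global_index (sel M (drop e p)) (sel k (drop e p)) J) (sel n (drop e p))"
    using idx_ok_global_index[OF blocking_sel[OF B bounds(2)]] idx_ok_sel[OF k] bounds_M(2) J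
    by (simp add: bcount_sel blockdims_sel)
  have "length I = length (take e p)" using I by (simp add: idx_ok_def)
  then have "global_index (sel M (take e p)) (sel k (take e p)) I
      @ global_index (sel M (drop e p)) (sel k (drop e p)) J
    = global_index (sel M p) (sel k p) (I @ J)"
    by (simp add: global_index_append[symmetric] sel_take_append_drop)
  then show ?thesis
    using tunfold_index ivec0_less_prod_list[OF okI] ivec0_less_prod_list[OF okJ] p lM
    by (simp add: univec0_ivec0[OF okI] univec0_ivec0[OF okJ] ptrans_tblock)
qed

section \<open>Blocks of the blocked unfolding\<close>

lemma PM_conj_carrier:
  assumes R: "is_blocking R nr" and C: "is_blocking C nc"
    and U: "U \<in> carrier_mat (prod_list nr) (prod_list nc)"
  shows "PM R nr * U * transpose_mat (PM C nc)
    \<in> carrier_mat (sum_list (group_sizes R)) (sum_list (group_sizes C))"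
  unfolding PM_eq_pmat_bperm[OF R] PM_eq_pmat_bperm[OF C] sum_group_sizes[OF R] sum_group_sizes[OF C]
  using U by (intro mult_carrier_mat[OF mult_carrier_mat]) auto

lemma mblock_PM_conj:
  assumes R: "is_blocking R nr" and C: "is_blocking C nc"
    and U: "U \<in> carrier_mat (prod_list nr) (prod_list nc)"
    and mu: "mu < prod_list (bcount R)" and ta: "ta < prod_list (bcount C)"
  shows "mblock (PM R nr * U * transpose_mat (PM C nc)) (group_sizes R) (group_sizes C) (Suc mu) (Suc ta)
    = mat (group_sizes R ! mu) (group_sizes C ! ta)
        (\<lambda>(i, j). U $$ (ivec0 (block_entry R mu i) nr, ivec0 (block_entry C ta j) nc))"
proof (rule eq_matI)
  fix i j
  assume "i < dim_row (mat (group_sizes R ! mu) (group_sizes C ! ta)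
      (\<lambda>(i, j). U $$ (ivec0 (block_entry R mu i) nr, ivec0 (block_entry C ta j) nc)))"
    and "j < dim_col (mat (group_sizes R ! mu) (group_sizes C ! ta)
      (\<lambda>(i, j). U $$ (ivec0 (block_entry R mu i) nr, ivec0 (block_entry C ta j) nc)))"
  then have i: "i < group_sizes R ! mu" and j: "j < group_sizes C ! ta" by simp_all
  have "sum_list (take mu (group_sizes R)) + i < prod_list nr"
    using offset_less_sum_list[of mu "group_sizes R" i] mu i sum_group_sizes[OF R] by simp
  moreover have "sum_list (take ta (group_sizes C)) + j < prod_list nc"
    using offset_less_sum_list[of ta "group_sizes C" j] ta j sum_group_sizes[OF C] by simp
  ultimately have "(PM R nr * U * transpose_mat (PM C nc))
        $$ (sum_list (take mu (group_sizes R)) + i, sum_list (take ta (group_sizes C)) + j)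
      = U $$ (ivec0 (block_entry R mu i) nr, ivec0 (block_entry C ta j) nc)"
    unfolding PM_eq_pmat_bperm[OF R] PM_eq_pmat_bperm[OF C]
    by (simp only: pmat_conj_index[OF bperm_permutes[OF R] bperm_permutes[OF C] U]
        bperm_offset[OF R mu i] bperm_offset[OF C ta j])
  then show "mblock (PM R nr * U * transpose_mat (PM C nc)) (group_sizes R) (group_sizes C)
      (Suc mu) (Suc ta) $$ (i, j)
    = mat (group_sizes R ! mu) (group_sizes C ! ta)
        (\<lambda>(i, j). U $$ (ivec0 (block_entry R mu i) nr, ivec0 (block_entry C ta j) nc)) $$ (i, j)"
    using i j by (simp add: mblock_def del: index_mult_mat)
qed (simp_all add: mblock_def)

lemma mblock_blocked_unfolding:
  fixes e :: nat
  assumes B: "is_blocking M n" and p: "distinct p" "set p = {1..length n}"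
    and k: "idx_ok k (bcount M)"
  defines "r \<equiv> take e p" and "c \<equiv> drop e p"
  shows "mblock (PM (sel M r) (sel n r) * tunfold n p e A * transpose_mat (PM (sel M c) (sel n c)))
      (group_sizes (sel M r)) (group_sizes (sel M c))
      (ivec (sel k r) (sel (bcount M) r)) (ivec (sel k c) (sel (bcount M) c))
    = tunfold (blockdims M k) p e (tblock M A k)"
proof -
  have lM: "length M = length n" using B by (simp add: is_blocking_def)
  note bounds = perm_take_drop_bounds[OF p(2), of e, folded r_def c_def]
  have bounds_M: "\<forall>x\<in>set r. 1 \<le> x \<and> x \<le> length M" "\<forall>x\<in>set c. 1 \<le> x \<and> x \<le> length M"
    using bounds lM by simp_all
  define bd where "bd = blockdims M k"
  define mu where "mu = ivec0 (sel k r) (sel (bcount M) r)"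
  define ta where "ta = ivec0 (sel k c) (sel (bcount M) c)"
  note R = block_entry_sel[OF bounds_M(1) k, folded mu_def bd_def]
  note C = block_entry_sel[OF bounds_M(2) k, folded ta_def bd_def]
  have "mblock (PM (sel M r) (sel n r) * tunfold n p e A * transpose_mat (PM (sel M c) (sel n c)))
      (group_sizes (sel M r)) (group_sizes (sel M c)) (Suc mu) (Suc ta)
    = mat (prod_list (sel bd r)) (prod_list (sel bd c)) (\<lambda>(i, j).
        tunfold n p e A $$ (ivec0 (block_entry (sel M r) mu i) (sel n r),
                            ivec0 (block_entry (sel M c) ta j) (sel n c)))"
    using mblock_PM_conj[OF blocking_sel[OF B bounds(1)] blocking_sel[OF B bounds(2)]
        tunfold_carrier[of n p e A, folded r_def c_def] R(1) C(1)] R(2) C(2)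
    by simp
  also have "\<dots> = tunfold bd p e (tblock M A k)"
  proof (rule eq_matI)
    fix i j
    assume "i < dim_row (tunfold bd p e (tblock M A k))" "j < dim_col (tunfold bd p e (tblock M A k))"
    then have i: "i < prod_list (sel bd r)" and j: "j < prod_list (sel bd c)"
      by (simp_all add: tunfold_def Let_def r_def c_def)
    then show "mat (prod_list (sel bd r)) (prod_list (sel bd c)) (\<lambda>(i, j).
        tunfold n p e A $$ (ivec0 (block_entry (sel M r) mu i) (sel n r),
                            ivec0 (block_entry (sel M c) ta j) (sel n c))) $$ (i, j)
      = tunfold bd p e (tblock M A k) $$ (i, j)"
      using tunfold_global_index[OF B p k idx_ok_univec0[OF i[unfolded r_def bd_def]]
          idx_ok_univec0[OF j[unfolded c_def bd_def]], of A, folded bd_def r_def c_def]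
      by (simp add: R(3) C(3) tunfold_index[where n = bd and p = p and e = e, folded r_def c_def])
  qed (simp_all add: tunfold_def Let_def r_def c_def)
  finally show ?thesis by (simp add: ivec_eq_Suc_ivec0 mu_def ta_def bd_def)
qed

theorem theorem3p3:
  fixes n :: "nat list" and M :: "nat list list" and A :: tensor
    and e :: nat and p :: "nat list"
  assumes blocking: "is_blocking M n"
    and e_pos: "1 \<le> e" and e_lt: "e < length n"
    and p_perm: "distinct p" "set p = {1..length n}"
  defines "r \<equiv> take e p" and "c \<equiv> drop e p"
  defines "R \<equiv> sel M r" and "C \<equiv> sel M c"
  defines "ARC \<equiv> PM R (sel n r) * tunfold n p e A * transpose_mat (PM C (sel n c))"
  shows "ARC \<in> carrier_mat (sum_list (group_sizes R)) (sum_list (group_sizes C))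
    \<and> length (group_sizes R) = prod_list (sel (bcount M) r)
    \<and> length (group_sizes C) = prod_list (sel (bcount M) c)
    \<and> (\<forall>k. idx_ok k (bcount M) \<longrightarrow>
          mblock ARC (group_sizes R) (group_sizes C)
                 (ivec (sel k r) (sel (bcount M) r)) (ivec (sel k c) (sel (bcount M) c))
          = tunfold (blockdims M k) p e (tblock M A k))"
proof -
  have lM: "length M = length n" using blocking by (simp add: is_blocking_def)
  note bounds = perm_take_drop_bounds[OF p_perm(2), of e, folded r_def c_def]
  have "ARC \<in> carrier_mat (sum_list (group_sizes R)) (sum_list (group_sizes C))"
    unfolding ARC_def R_def C_def
    by (rule PM_conj_carrier[OF blocking_sel[OF blocking bounds(1)] blocking_sel[OF blocking bounds(2)]
          tunfold_carrier[of n p e A, folded r_def c_def]])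
  moreover have "length (group_sizes R) = prod_list (sel (bcount M) r)"
    "length (group_sizes C) = prod_list (sel (bcount M) c)"
    using bcount_sel bounds lM by (simp_all add: R_def C_def)
  moreover have "mblock ARC (group_sizes R) (group_sizes C)
      (ivec (sel k r) (sel (bcount M) r)) (ivec (sel k c) (sel (bcount M) c))
    = tunfold (blockdims M k) p e (tblock M A k)" if "idx_ok k (bcount M)" for k
    unfolding ARC_def R_def C_def r_def c_def
    by (rule mblock_blocked_unfolding[OF blocking p_perm that])
  ultimately show ?thesis by blast
qed

end
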